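(* Let $\mathcal{I}_1\sqcup\cdots\sqcup\mathcal{I}_K=[N]$ be a partition of the modes into nonempty cells, let $\sigma_n$ denote the index of the cell containing mode $n$, let $\tilde I_1,\dots,\tilde I_K$ be positive integers and $I_n=\tilde I_{\sigma_n}$. Let $\mathbf{A}_k\in\mathbb{R}^{\tilde I_k\times r}$ for $k\in[K]$. If $\mathcal{Y}\in\mathbb{R}^{I_1\times\cdots\times I_N}$ is symmetric with respect to the partition $\mathcal{I}_1\sqcup\cdots\sqcup\mathcal{I}_K$, then for every $k\in[K]$ and all $u,v\in\mathcal{I}_k$, $$\mathbf{Y}_{(u)}\Big(\textstyle\bigodot_{j\neq u}\mathbf{A}_{\sigma_j}\Big) = \mathbf{Y}_{(v)}\Big(\textstyle\bigodot_{j\neq v}\mathbf{A}_{\sigma_j}\Big),$$ where $\bigodot_{j\neq t}\mathbf{A}_{\sigma_j} = \mathbf{A}_{\sigma_N}\odot\cdots\odot\mathbf{A}_{\sigma_{t+1}}\odot\mathbf{A}_{\sigma_{t-1}}\odot\cdots\odot\mathbf{A}_{\sigma_1}$.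
   Context: A tensor $\mathcal{Y}\in\mathbb{R}^{I_1\times\cdots\times I_N}$ is symmetric with respect to the partition if $y_{(i_{\pi(1)},\dots,i_{\pi(N)})}=y_{(i_1,\dots,i_N)}$ for every index $(i_1,\dots,i_N)$ and every permutation $\pi$ of $[N]$ mapping each cell $\mathcal{I}_\ell$ to itself. $\odot$ is the Khatri–Rao product: $\mathbf{A}\odot\mathbf{B}$ has $j$-th column $\mathbf{A}_{:,j}\otimes\mathbf{B}_{:,j}$. The mode-$t$ matricization $\mathbf{Y}_{(t)}\in\mathbb{R}^{I_t\times\prod_{j\neq t}I_j}$ places $y_{i_1,\dots,i_N}$ in row $i_t$ and column $1+\sum_{k\neq t}(i_k-1)\prod_{m<k,\,m\neq t}I_m$. *)

theory Defs
  imports "HOL-Analysis.Analysis" "HOL-Combinatorics.Permutations"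
begin

text \<open>Conventions (0-based): modes are 0..<N, cells 0..<K, a multi-index is a function
  i :: nat => nat with i n < I n for n < N and i n = 0 for n >= N.  Matrices are functions ri => col => real
  with explicit dimensions.\<close>

definition valid_index :: "nat \<Rightarrow> (nat \<Rightarrow> nat) \<Rightarrow> (nat \<Rightarrow> nat) \<Rightarrow> bool" where
  "valid_index N I i \<longleftrightarrow> (\<forall>n<N. i n < I n) \<and> (\<forall>n\<ge>N. i n = 0)"

definition partition_symmetric ::
  "nat \<Rightarrow> (nat \<Rightarrow> nat) \<Rightarrow> (nat \<Rightarrow> nat) \<Rightarrow> ((nat \<Rightarrow> nat) \<Rightarrow> real) \<Rightarrow> bool" where
  "partition_symmetric N I \<sigma> Y \<longleftrightarrow>
     (\<forall>\<pi> i. \<pi> permutes {..<N} \<longrightarrow> (\<forall>n<N. \<sigma> (\<pi> n) = \<sigma> n) \<longrightarrow> valid_index N I i \<longrightarrow>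
        Y (\<lambda>n. i (\<pi> n)) = Y i)"

definition ncols :: "nat \<Rightarrow> (nat \<Rightarrow> nat) \<Rightarrow> nat \<Rightarrow> nat" where
  "ncols N I t = (\<Prod>j\<in>{..<N} - {t}. I j)"

definition stride :: "(nat \<Rightarrow> nat) \<Rightarrow> nat \<Rightarrow> nat \<Rightarrow> nat" where
  "stride I t k = (\<Prod>m\<in>{..<k} - {t}. I m)"

text \<open>Mode-t matricization: entry (ri, col) is y at the multi-index whose t-th entry is
  ri and whose other entries are the mixed-radix digits of col, i.e. the unique index with
  col = sum over k~=t of i_k * stride k.\<close>
definition matricize ::
  "nat \<Rightarrow> (nat \<Rightarrow> nat) \<Rightarrow> ((nat \<Rightarrow> nat) \<Rightarrow> real) \<Rightarrow> nat \<Rightarrow> nat \<Rightarrow> nat \<Rightarrow> real" where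
  "matricize N I Y t ri col =
     Y (\<lambda>k. if k = t then ri else if k < N then (col div stride I t k) mod I k else 0)"

text \<open>Khatri-Rao product of A (with p rows) and B (with q rows): ri a*q+b, column j
  holds A a j * B b j, i.e. column j is the Kronecker product of the columns.\<close>
definition khatri_rao ::
  "(nat \<Rightarrow> nat \<Rightarrow> real) \<Rightarrow> nat \<Rightarrow> (nat \<Rightarrow> nat \<Rightarrow> real) \<Rightarrow> nat \<Rightarrow> nat \<Rightarrow> nat \<Rightarrow> real" where
  "khatri_rao A p B q = (\<lambda>ri j. A (ri div q) j * B (ri mod q) j)"

text \<open>kr_skip A sigma It t n = A_{sigma_n} kr ... kr A_{sigma_1} with the factor for mode t
  omitted (0-based: factors for modes n-1,...,0), together with its number of rows.\<close>
fun kr_skip ::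
  "(nat \<Rightarrow> nat \<Rightarrow> nat \<Rightarrow> real) \<Rightarrow> (nat \<Rightarrow> nat) \<Rightarrow> (nat \<Rightarrow> nat) \<Rightarrow> nat \<Rightarrow> nat
     \<Rightarrow> (nat \<Rightarrow> nat \<Rightarrow> real) \<times> nat" where
  "kr_skip A \<sigma> It t 0 = ((\<lambda>_ _. 1), 1)"
| "kr_skip A \<sigma> It t (Suc n) =
     (let (B, q) = kr_skip A \<sigma> It t n in
      if n = t then (B, q)
      else (khatri_rao (A (\<sigma> n)) (It (\<sigma> n)) B q, It (\<sigma> n) * q))"

text \<open>Entry (ri, c) of Y_(t) times (KR_{j~=t} A_{sigma_j}).\<close>
definition mttkrp ::
  "nat \<Rightarrow> (nat \<Rightarrow> nat) \<Rightarrow> (nat \<Rightarrow> nat) \<Rightarrow> (nat \<Rightarrow> nat \<Rightarrow> nat \<Rightarrow> real)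
     \<Rightarrow> ((nat \<Rightarrow> nat) \<Rightarrow> real) \<Rightarrow> nat \<Rightarrow> nat \<Rightarrow> nat \<Rightarrow> real" where
  "mttkrp N \<sigma> It A Y t ri c =
     (\<Sum>col<ncols N (\<lambda>n. It (\<sigma> n)) t.
        matricize N (\<lambda>n. It (\<sigma> n)) Y t ri col * fst (kr_skip A \<sigma> It t N) col c)"

end

theory Submission
  imports Defs
begin

(* The column index of the mode-t matricization and the row index of the Khatri-Rao product
   skipping mode t are read in the same mixed-radix system, so both decode to the same digits.
   Hence the (ri, c) entry of Y_(t) (KR_{j ~= t} A_{sigma_j}) is the sum of
   Y(i) * prod_{j ~= t} A_{sigma_j}(i_j, c) over the multi-indices i with i_t = ri.
   A permutation of the modes that preserves the cells, such as the transposition of u and v,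
   fixes Y and the factors A_{sigma_j}; reindexing the sum by it moves the mode from v to u. *)

definition mixed_radix_digit :: "(nat \<Rightarrow> nat) \<Rightarrow> nat \<Rightarrow> nat \<Rightarrow> nat \<Rightarrow> nat" where
  "mixed_radix_digit I t col k = col div stride I t k mod I k"

definition mixed_radix_value :: "(nat \<Rightarrow> nat) \<Rightarrow> nat \<Rightarrow> nat \<Rightarrow> (nat \<Rightarrow> nat) \<Rightarrow> nat" where
  "mixed_radix_value I t n i = (\<Sum>k\<in>{..<n} - {t}. i k * stride I t k)"

definition slice_indices :: "nat \<Rightarrow> (nat \<Rightarrow> nat) \<Rightarrow> nat \<Rightarrow> nat \<Rightarrow> (nat \<Rightarrow> nat) set" where
  "slice_indices N I t ri = {i. valid_index N I i \<and> i t = ri}"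

lemma lessThan_Suc_minus:
  "{..<Suc n} - {t} = (if n = t then {..<n} - {t} else insert n ({..<n} - {t}))"
  by auto

lemma stride_Suc: "stride I t (Suc n) = (if n = t then stride I t n else stride I t n * I n)"
  unfolding stride_def lessThan_Suc_minus by (simp add: mult.commute)

lemma ncols_eq_stride: "ncols N I t = stride I t N"
  unfolding ncols_def stride_def ..

lemma stride_Suc_dvd: "k < n \<Longrightarrow> k \<noteq> t \<Longrightarrow> stride I t k * I k dvd stride I t n"
proof (induction n)
  case (Suc n)
  then show ?case
    by (cases "k = n") (auto simp: stride_Suc)
qed simp

lemma mixed_radix_digit_mod_stride:
  assumes "k < n" "k \<noteq> t"
  shows "mixed_radix_digit I t (col mod stride I t n) k = mixed_radix_digit I t col k"
proof -
  obtain M where M: "stride I t n = stride I t k * (I k * M)"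
    using stride_Suc_dvd[OF assms, of I] by (metis dvdE mult.assoc)
  let ?s = "stride I t k"
  have "col mod stride I t n = ?s * (col div ?s mod (I k * M)) + col mod ?s"
    unfolding M by (rule mod_mult2_eq)
  then have "col mod stride I t n div ?s = col div ?s mod (I k * M)"
    by (cases "?s = 0") simp_all
  then show ?thesis
    unfolding mixed_radix_digit_def by (simp add: mod_mod_cancel)
qed

lemma mixed_radix_value_cong:
  "(\<And>k. k < n \<Longrightarrow> k \<noteq> t \<Longrightarrow> i k = i' k) \<Longrightarrow>
    mixed_radix_value I t n i = mixed_radix_value I t n i'"
  unfolding mixed_radix_value_def by (rule sum.cong) auto

lemma mixed_radix_value_Suc:
  "mixed_radix_value I t (Suc n) i =
     (if n = t then mixed_radix_value I t n i else mixed_radix_value I t n i + i n * stride I t n)"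
  unfolding mixed_radix_value_def lessThan_Suc_minus by simp

lemma mixed_radix_value_digits:
  "mixed_radix_value I t n (mixed_radix_digit I t col) = col mod stride I t n"
proof (induction n)
  case 0
  then show ?case by (simp add: mixed_radix_value_def stride_def)
next
  case (Suc n)
  then show ?case
    by (cases "n = t") (simp_all add: mixed_radix_value_Suc stride_Suc mixed_radix_digit_def mod_mult2_eq)
qed

lemma mixed_radix_value_less:
  assumes "\<forall>k\<in>{..<n} - {t}. i k < I k"
  shows "mixed_radix_value I t n i < stride I t n"
  using assms
proof (induction n)
  case 0
  then show ?case by (simp add: mixed_radix_value_def stride_def)
next
  case (Suc n)
  then have IH: "mixed_radix_value I t n i < stride I t n" by auto
  show ?case
  proof (cases "n = t")
    case False
    then have "Suc (i n) \<le> I n" using Suc.prems by (simp add: Suc_le_eq)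
    then have "mixed_radix_value I t n i + i n * stride I t n < Suc (i n) * stride I t n"
      using IH by simp
    also have "\<dots> \<le> stride I t n * I n"
      using \<open>Suc (i n) \<le> I n\<close> by (metis mult.commute mult_le_mono1)
    finally show ?thesis using False by (simp add: mixed_radix_value_Suc stride_Suc)
  qed (use IH in \<open>simp add: mixed_radix_value_Suc stride_Suc\<close>)
qed

lemma mixed_radix_digit_value:
  assumes "\<forall>m\<in>{..<n} - {t}. i m < I m" "k < n" "k \<noteq> t"
  shows "mixed_radix_digit I t (mixed_radix_value I t n i) k = i k"
  using assms
proof (induction n)
  case (Suc n)
  let ?x = "mixed_radix_value I t n i" and ?s = "stride I t n"
  have x_less: "?x < ?s"
    using Suc.prems(1) by (intro mixed_radix_value_less) auto
  show ?case
  proof (cases "n = t")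
    case True
    then show ?thesis using Suc by (simp add: mixed_radix_value_Suc)
  next
    case False
    have value_Suc: "mixed_radix_value I t (Suc n) i = ?x + i n * ?s"
      using False by (simp add: mixed_radix_value_Suc)
    show ?thesis
    proof (cases "k = n")
      case True
      have "i n < I n" using Suc.prems(1) False by auto
      moreover have "(?x + i n * ?s) div ?s = i n" using x_less by simp
      ultimately show ?thesis
        unfolding value_Suc True mixed_radix_digit_def by simp
    next
      case False
      then have "k < n" using Suc.prems(2) by simp
      have "mixed_radix_digit I t (?x + i n * ?s) k = mixed_radix_digit I t ((?x + i n * ?s) mod ?s) k"
        by (rule mixed_radix_digit_mod_stride[OF \<open>k < n\<close> Suc.prems(3), symmetric])
      also have "\<dots> = mixed_radix_digit I t ?x k" using x_less by simp
      also have "\<dots> = i k" using Suc \<open>k < n\<close> by simp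
      finally show ?thesis unfolding value_Suc .
    qed
  qed
qed simp

definition matricize_index :: "nat \<Rightarrow> (nat \<Rightarrow> nat) \<Rightarrow> nat \<Rightarrow> nat \<Rightarrow> nat \<Rightarrow> nat \<Rightarrow> nat" where
  "matricize_index N I t ri col =
     (\<lambda>k. if k = t then ri else if k < N then mixed_radix_digit I t col k else 0)"

lemma matricize_eq: "matricize N I Y t ri col = Y (matricize_index N I t ri col)"
  unfolding matricize_def matricize_index_def mixed_radix_digit_def ..

lemma bij_betw_matricize_index:
  assumes "t < N" "ri < I t" "\<forall>m<N. 0 < I m"
  shows "bij_betw (matricize_index N I t ri) {..<stride I t N} (slice_indices N I t ri)"
proof (rule bij_betw_byWitness[where f' = "mixed_radix_value I t N"])
  have "mixed_radix_value I t N (matricize_index N I t ri col) = mixed_radix_value I t N (mixed_radix_digit I t col)"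
    for col by (rule mixed_radix_value_cong) (simp add: matricize_index_def)
  then show "\<forall>col\<in>{..<stride I t N}. mixed_radix_value I t N (matricize_index N I t ri col) = col"
    by (simp add: mixed_radix_value_digits)
  show "\<forall>i\<in>slice_indices N I t ri. matricize_index N I t ri (mixed_radix_value I t N i) = i"
    by (auto simp: slice_indices_def valid_index_def matricize_index_def mixed_radix_digit_value)
  show "matricize_index N I t ri ` {..<stride I t N} \<subseteq> slice_indices N I t ri"
    using assms by (auto simp: slice_indices_def valid_index_def matricize_index_def mixed_radix_digit_def)
  show "mixed_radix_value I t N ` slice_indices N I t ri \<subseteq> {..<stride I t N}"
    by (auto simp: slice_indices_def valid_index_def intro!: mixed_radix_value_less)
qed

lemma kr_skip_Suc:
  "kr_skip A \<sigma> It t (Suc n) =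
     (if n = t then kr_skip A \<sigma> It t n
      else (khatri_rao (A (\<sigma> n)) (It (\<sigma> n)) (fst (kr_skip A \<sigma> It t n)) (snd (kr_skip A \<sigma> It t n)),
            It (\<sigma> n) * snd (kr_skip A \<sigma> It t n)))"
  by (simp add: split_beta)

declare kr_skip.simps(2) [simp del] kr_skip_Suc [simp]

lemma snd_kr_skip: "snd (kr_skip A \<sigma> It t n) = stride (\<lambda>m. It (\<sigma> m)) t n"
proof (induction n)
  case 0
  then show ?case by (simp add: stride_def)
next
  case (Suc n)
  then show ?case
    by (cases "n = t") (simp_all add: stride_Suc mult.commute)
qed

lemma fst_kr_skip:
  assumes "col < stride (\<lambda>m. It (\<sigma> m)) t n"
  shows "fst (kr_skip A \<sigma> It t n) col c =
    (\<Prod>j\<in>{..<n} - {t}. A (\<sigma> j) (mixed_radix_digit (\<lambda>m. It (\<sigma> m)) t col j) c)"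
  using assms
proof (induction n arbitrary: col)
  case (Suc n)
  let ?I = "\<lambda>m. It (\<sigma> m)"
  let ?s = "stride ?I t n"
  show ?case
  proof (cases "n = t")
    case True
    then show ?thesis using Suc by (simp add: stride_Suc lessThan_Suc_minus)
  next
    case False
    then have col_less: "col < ?s * It (\<sigma> n)" using Suc.prems by (simp add: stride_Suc)
    then have "0 < ?s" by (cases "?s = 0") simp_all
    have "col div ?s < It (\<sigma> n)"
      using col_less \<open>0 < ?s\<close> by (simp add: div_less_iff_less_mult mult.commute)
    then have digit_n: "col div ?s = mixed_radix_digit ?I t col n"
      by (simp add: mixed_radix_digit_def)
    have "fst (kr_skip A \<sigma> It t n) (col mod ?s) c =
        (\<Prod>j\<in>{..<n} - {t}. A (\<sigma> j) (mixed_radix_digit ?I t (col mod ?s) j) c)"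
      using Suc.IH[of "col mod ?s"] \<open>0 < ?s\<close> by simp
    also have "\<dots> = (\<Prod>j\<in>{..<n} - {t}. A (\<sigma> j) (mixed_radix_digit ?I t col j) c)"
      by (rule prod.cong) (simp_all add: mixed_radix_digit_mod_stride)
    finally show ?thesis
      using False digit_n by (simp add: snd_kr_skip khatri_rao_def lessThan_Suc_minus)
  qed
qed simp

lemma mttkrp_eq_slice_sum:
  assumes "t < N" "ri < It (\<sigma> t)" "\<forall>m<N. 0 < It (\<sigma> m)"
  shows "mttkrp N \<sigma> It A Y t ri c =
    (\<Sum>i\<in>slice_indices N (\<lambda>m. It (\<sigma> m)) t ri. Y i * (\<Prod>j\<in>{..<N} - {t}. A (\<sigma> j) (i j) c))"
proof -
  let ?I = "\<lambda>m. It (\<sigma> m)"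
  let ?h = "matricize_index N ?I t ri"
  have "mttkrp N \<sigma> It A Y t ri c =
      (\<Sum>col<stride ?I t N. Y (?h col) * (\<Prod>j\<in>{..<N} - {t}. A (\<sigma> j) (?h col j) c))"
    unfolding mttkrp_def ncols_eq_stride matricize_eq
    by (intro sum.cong refl arg_cong2[where f = "(*)"] prod.cong)
       (auto simp: fst_kr_skip matricize_index_def)
  also have "\<dots> = (\<Sum>i\<in>slice_indices N ?I t ri. Y i * (\<Prod>j\<in>{..<N} - {t}. A (\<sigma> j) (i j) c))"
    using bij_betw_matricize_index[of t N ri ?I] assms by (intro sum.reindex_bij_betw) auto
  finally show ?thesis .
qed

lemma valid_index_permute:
  assumes "\<pi> permutes {..<N}" "\<forall>n<N. I (\<pi> n) = I n" "valid_index N I i"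
  shows "valid_index N I (i \<circ> \<pi>)"
  using assms permutes_in_image[OF assms(1)] permutes_not_in[OF assms(1)]
  unfolding valid_index_def by (metis comp_apply lessThan_iff not_le)

lemma mttkrp_permute_mode:
  assumes perm: "\<pi> permutes {..<N}" and cells: "\<forall>n<N. \<sigma> (\<pi> n) = \<sigma> n"
    and sym: "partition_symmetric N (\<lambda>m. It (\<sigma> m)) \<sigma> Y"
    and pos: "\<forall>m<N. 0 < It (\<sigma> m)" and v: "v < N" and ri: "ri < It (\<sigma> v)"
  shows "mttkrp N \<sigma> It A Y (\<pi> v) ri c = mttkrp N \<sigma> It A Y v ri c"
proof -
  let ?I = "\<lambda>m. It (\<sigma> m)"
  let ?f = "\<lambda>t i. Y i * (\<Prod>j\<in>{..<N} - {t}. A (\<sigma> j) (i j) c)"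
  have "\<pi> v < N" using permutes_in_image[OF perm, of v] v by simp
  have inv_perm: "inv \<pi> permutes {..<N}" by (rule permutes_inv[OF perm])
  have inv_cells: "\<forall>n<N. \<sigma> (inv \<pi> n) = \<sigma> n"
    using cells permutes_inverses(1)[OF perm] permutes_in_image[OF inv_perm] by (metis lessThan_iff)
  have bij_modes: "bij_betw \<pi> ({..<N} - {v}) ({..<N} - {\<pi> v})"
    using permutes_imp_bij[OF perm] v by (intro bij_betw_DiffI) (auto simp: bij_betw_def)
  have bij_slices: "bij_betw (\<lambda>i. i \<circ> \<pi>) (slice_indices N ?I (\<pi> v) ri) (slice_indices N ?I v ri)"
  proof (rule bij_betw_byWitness[where f' = "\<lambda>i. i \<circ> inv \<pi>"])
    show "(\<lambda>i. i \<circ> \<pi>) ` slice_indices N ?I (\<pi> v) ri \<subseteq> slice_indices N ?I v ri"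
      using valid_index_permute[OF perm] cells by (auto simp: slice_indices_def)
    show "(\<lambda>i. i \<circ> inv \<pi>) ` slice_indices N ?I v ri \<subseteq> slice_indices N ?I (\<pi> v) ri"
      using valid_index_permute[OF inv_perm] inv_cells
      by (auto simp: slice_indices_def permutes_inverses(2)[OF perm])
  qed (simp_all add: comp_assoc permutes_inv_o[OF perm])
  have "?f v (i \<circ> \<pi>) = ?f (\<pi> v) i" if "i \<in> slice_indices N ?I (\<pi> v) ri" for i
  proof -
    have "Y (i \<circ> \<pi>) = Y i"
      using sym perm cells that unfolding partition_symmetric_def slice_indices_def comp_def by blast
    moreover have "(\<Prod>j\<in>{..<N} - {v}. A (\<sigma> j) (i (\<pi> j)) c) =
        (\<Prod>j\<in>{..<N} - {\<pi> v}. A (\<sigma> j) (i j) c)"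
      using prod.reindex_bij_betw[OF bij_modes, of "\<lambda>j. A (\<sigma> j) (i j) c"] cells by simp
    ultimately show ?thesis by simp
  qed
  then have "sum (?f (\<pi> v)) (slice_indices N ?I (\<pi> v) ri) = sum (?f v) (slice_indices N ?I v ri)"
    using sum.reindex_bij_betw[OF bij_slices, of "?f v"] by (simp add: comp_def)
  moreover have "ri < It (\<sigma> (\<pi> v))" using cells v ri by simp
  ultimately show ?thesis
    using mttkrp_eq_slice_sum[of _ _ _ It \<sigma>, OF \<open>\<pi> v < N\<close> \<open>ri < It (\<sigma> (\<pi> v))\<close> pos]
      mttkrp_eq_slice_sum[of _ _ _ It \<sigma>, OF v ri pos] by simp
qed

theorem proposition2:
  fixes N K r :: nat
    and \<sigma> :: "nat \<Rightarrow> nat"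
    and It :: "nat \<Rightarrow> nat"
    and A :: "nat \<Rightarrow> nat \<Rightarrow> nat \<Rightarrow> real"
    and Y :: "(nat \<Rightarrow> nat) \<Rightarrow> real"
  assumes cells: "\<forall>n<N. \<sigma> n < K"
    and nonempty: "\<forall>k<K. \<exists>n<N. \<sigma> n = k"
    and pos: "\<forall>k<K. 0 < It k"
    and sym: "partition_symmetric N (\<lambda>n. It (\<sigma> n)) \<sigma> Y"
    and k: "k < K"
    and u: "u < N" "\<sigma> u = k"
    and v: "v < N" "\<sigma> v = k"
  shows "\<forall>ri < It k. \<forall>c < r. mttkrp N \<sigma> It A Y u ri c = mttkrp N \<sigma> It A Y v ri c"
proof (intro allI impI)
  fix ri c assume "ri < It k"
  let ?\<pi> = "Transposition.transpose u v"
  have "?\<pi> permutes {..<N}" using u v by (intro permutes_swap_id) auto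
  moreover have "\<forall>n<N. \<sigma> (?\<pi> n) = \<sigma> n" using u v by (simp add: Transposition.transpose_def)
  moreover have "\<forall>m<N. 0 < It (\<sigma> m)" using cells pos by simp
  ultimately have "mttkrp N \<sigma> It A Y (?\<pi> v) ri c = mttkrp N \<sigma> It A Y v ri c"
    using mttkrp_permute_mode[OF _ _ sym] v \<open>ri < It k\<close> by blast
  then show "mttkrp N \<sigma> It A Y u ri c = mttkrp N \<sigma> It A Y v ri c" by simp
qed

end
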